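(* Let $\mathscr{H}$ be a complex Hilbert space and $A\in\mathbb{B}(\mathscr{H})$. Then $$w^2(A)\leq\frac{1}{4}\, w^2\left(|A|+i|A^*|\right)+\frac{1}{8}\left\||A|^2+|A^*|^2\right\|+\frac{1}{4}\,w\left(|A||A^*|\right).$$
   Context: $\mathbb{B}(\mathscr{H})$ denotes the algebra of bounded linear operators on $\mathscr{H}$; $\|\cdot\|$ is the operator norm. For $T\in\mathbb{B}(\mathscr{H})$, $|T|=(T^*T)^{1/2}$ is the positive square root of $T^*T$, and $w(T)=\sup\{|\langle Tx,x\rangle|: x\in\mathscr{H},\ \|x\|=1\}$ is the numerical radius. *)

theory Defs
  imports "HOL-Analysis.Analysis"
begin

text \<open>A complex Hilbert space: a real Banach space carrying a complex scalar
multiplication compatible with the real one, and a complex inner product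
(conjugate-linear in the first argument, linear in the second) inducing the norm.\<close>

class chilbert = banach +
  fixes scaleC :: "complex \<Rightarrow> 'a \<Rightarrow> 'a"
    and cinner :: "'a \<Rightarrow> 'a \<Rightarrow> complex"
  assumes scaleC_add_right: "scaleC c (x + y) = scaleC c x + scaleC c y"
    and scaleC_add_left: "scaleC (b + c) x = scaleC b x + scaleC c x"
    and scaleC_scaleC: "scaleC b (scaleC c x) = scaleC (b * c) x"
    and scaleC_one: "scaleC 1 x = x"
    and scaleR_scaleC: "scaleR r x = scaleC (complex_of_real r) x"
    and cinner_commute: "cinner x y = cnj (cinner y x)"
    and cinner_add_left: "cinner (x + y) z = cinner x z + cinner y z"
    and cinner_scaleC_left: "cinner (scaleC c x) y = cnj c * cinner x y"
    and cinner_self_real: "Im (cinner x x) = 0"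
    and cinner_self_nonneg: "0 \<le> Re (cinner x x)"
    and cinner_self_eq_zero: "cinner x x = 0 \<longleftrightarrow> x = 0"
    and norm_eq_sqrt_cinner: "norm x = sqrt (Re (cinner x x))"

definition bounded_clinear :: "('a::chilbert \<Rightarrow> 'a) \<Rightarrow> bool" where
  "bounded_clinear T \<longleftrightarrow>
     (\<forall>x y. T (x + y) = T x + T y) \<and>
     (\<forall>c x. T (scaleC c x) = scaleC c (T x)) \<and>
     (\<exists>K. \<forall>x. norm (T x) \<le> norm x * K)"

definition adj :: "('a::chilbert \<Rightarrow> 'a) \<Rightarrow> ('a \<Rightarrow> 'a)" where
  "adj T = (THE S. \<forall>x y. cinner (T x) y = cinner x (S y))"

definition positive_op :: "('a::chilbert \<Rightarrow> 'a) \<Rightarrow> bool" where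
  "positive_op T \<longleftrightarrow> bounded_clinear T \<and>
     (\<forall>x. Im (cinner (T x) x) = 0 \<and> 0 \<le> Re (cinner (T x) x))"

definition sqrt_op :: "('a::chilbert \<Rightarrow> 'a) \<Rightarrow> ('a \<Rightarrow> 'a)" where
  "sqrt_op T = (THE S. positive_op S \<and> S \<circ> S = T)"

definition abs_op :: "('a::chilbert \<Rightarrow> 'a) \<Rightarrow> ('a \<Rightarrow> 'a)" where
  "abs_op T = sqrt_op (adj T \<circ> T)"

text \<open>Numerical radius w(T) = sup { |<Tx,x>| : ||x|| = 1 } (0 is inserted so that
the trivial space gets w = 0; this does not change the value otherwise).\<close>
definition numrad :: "('a::chilbert \<Rightarrow> 'a) \<Rightarrow> real" where
  "numrad T = Sup (insert 0 {cmod (cinner (T x) x) | x. norm x = 1})"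

end

theory Submission
  imports Defs
begin

text \<open>Write P = |A| and Q = |A*|. Kato's mixed Schwarz inequality gives
  |(A x, x)|^2 \<le> a b with a = (P x, x), b = (Q x, x), and a b \<le> (a^2 + b^2)/4 + a b/2.
  Here a^2 + b^2 = |((P + i Q) x, x)|^2, while Buzano's inequality for the vectors P x, Q x gives
  a b \<le> (||P x|| ||Q x|| + |(P Q x, x)|)/2 \<le> ((P^2 + Q^2) x, x)/4 + |(P Q x, x)|/2.
  Taking the supremum over unit vectors x yields the theorem.

  The positive square root of 0 \<le> T \<le> lam is the series sqrt lam \<Sigma> c_n (I - T/lam)^n, where
  c_n are the Taylor coefficients of sqrt (1 - t). It commutes with every operator commuting
  with T, which gives its uniqueness as well as the intertwining relation A |A| = |A*| A on which
  the mixed Schwarz inequality rests.\<close>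

section \<open>Complex inner product spaces\<close>

lemma cinner_add_right: "cinner x (y + z) = cinner x y + cinner x (z::'a::chilbert)"
  by (metis cinner_commute cinner_add_left complex_cnj_add)

lemma cinner_scaleC_right: "cinner x (scaleC c y) = c * cinner x (y::'a::chilbert)"
  by (metis cinner_commute cinner_scaleC_left complex_cnj_cnj complex_cnj_mult)

lemma cinner_zero_left [simp]: "cinner 0 (y::'a::chilbert) = 0"
  using cinner_add_left[of "0::'a" 0 y] by simp

lemma cinner_zero_right [simp]: "cinner x (0::'a::chilbert) = 0"
  using cinner_add_right[of x "0::'a" 0] by simp

lemma cinner_minus_left: "cinner (- x) (y::'a::chilbert) = - cinner x y"
  using cinner_add_left[of x "-x" y] by (simp add: eq_neg_iff_add_eq_0 add.commute)

lemma cinner_minus_right: "cinner x (- y::'a::chilbert) = - cinner x y"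
  using cinner_add_right[of x y "-y"] by (simp add: eq_neg_iff_add_eq_0 add.commute)

lemma cinner_diff_left: "cinner (x - y) (z::'a::chilbert) = cinner x z - cinner y z"
  using cinner_add_left[of x "-y" z] by (simp add: cinner_minus_left)

lemma cinner_diff_right: "cinner x (y - z::'a::chilbert) = cinner x y - cinner x z"
  using cinner_add_right[of x y "-z"] by (simp add: cinner_minus_right)

lemma cinner_scaleR_left: "cinner (scaleR r x) (y::'a::chilbert) = of_real r * cinner x y"
  by (simp add: scaleR_scaleC cinner_scaleC_left)

lemma cinner_scaleR_right: "cinner x (scaleR r y::'a::chilbert) = of_real r * cinner x y"
  by (simp add: scaleR_scaleC cinner_scaleC_right)

lemmas cinner_simps = cinner_add_left cinner_add_right cinner_scaleC_left cinner_scaleC_right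
  cinner_diff_left cinner_diff_right cinner_minus_left cinner_minus_right
  cinner_scaleR_left cinner_scaleR_right

lemma cnj_mult_self: "cnj c * c = complex_of_real ((cmod c)^2)"
  by (metis complex_norm_square mult.commute of_real_power)

lemma mult_cnj_self: "c * cnj c = complex_of_real ((cmod c)^2)"
  by (metis complex_norm_square of_real_power)

lemma cinner_self: "cinner x (x::'a::chilbert) = of_real ((norm x)^2)"
proof -
  have "(norm x)^2 = Re (cinner x x)"
    using norm_eq_sqrt_cinner[of x] cinner_self_nonneg[of x] by simp
  then show ?thesis using cinner_self_real[of x] by (simp add: complex_eq_iff)
qed

lemma Re_cinner_self: "Re (cinner x (x::'a::chilbert)) = (norm x)^2"
  by (simp add: cinner_self)

lemma cinner_ext: assumes "\<And>y. cinner y x = cinner y (z::'a::chilbert)" shows "x = z"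
proof -
  have "cinner (x - z) (x - z) = 0" using assms[of "x - z"] by (simp add: cinner_diff_right)
  then show ?thesis by (simp add: cinner_self_eq_zero)
qed

lemma scaleC_zero_right [simp]: "scaleC c (0::'a::chilbert) = 0"
  using scaleC_add_right[of c "0::'a" 0] by simp

lemma scaleC_zero_left [simp]: "scaleC 0 (x::'a::chilbert) = 0"
  using scaleC_add_left[of 0 0 x] by simp

lemma norm_scaleC: "norm (scaleC c x) = cmod c * norm (x::'a::chilbert)"
proof -
  have "(norm (scaleC c x))^2 = Re (cnj c * c * cinner x x)"
    by (simp add: Re_cinner_self[symmetric] cinner_simps mult_ac)
  also have "\<dots> = (cmod c * norm x)^2"
    by (simp add: cnj_mult_self cinner_self power_mult_distrib)
  finally show ?thesis by (simp add: power2_eq_iff_nonneg)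
qed

lemma norm_add_scaleC_power2:
  "(norm (x + scaleC t y))^2
     = (norm x)^2 + Re (t * cinner x y) + Re (cnj t * cinner y x) + (cmod t)^2 * (norm (y::'a::chilbert))^2"
proof -
  have "(norm (x + scaleC t y))^2 = Re (cinner (x + scaleC t y) (x + scaleC t y))"
    by (simp add: Re_cinner_self)
  also have "cinner (x + scaleC t y) (x + scaleC t y)
      = cinner x x + t * cinner x y + cnj t * cinner y x + (cnj t * t) * cinner y y"
    by (simp add: cinner_simps algebra_simps)
  also have "cnj t * t = of_real ((cmod t)^2)" by (rule cnj_mult_self)
  finally show ?thesis by (simp add: cinner_self)
qed

lemma parallelogram_law:
  "(norm (x + y))^2 + (norm (x - y))^2 = 2 * (norm x)^2 + 2 * (norm (y::'a::chilbert))^2"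
proof -
  have "of_real ((norm (x + y))^2 + (norm (x - y))^2) = cinner (x + y) (x + y) + cinner (x - y) (x - y)"
    by (simp add: cinner_self)
  also have "\<dots> = 2 * cinner x x + 2 * cinner y y"
    by (simp add: cinner_simps algebra_simps)
  also have "\<dots> = of_real (2 * (norm x)^2 + 2 * (norm y)^2)"
    by (simp add: cinner_self)
  finally show ?thesis by (simp only: of_real_eq_iff)
qed

section \<open>Bounded and positive operators\<close>

lemma bounded_clinear_simps:
  assumes "bounded_clinear T"
  shows "T (x + y) = T x + T y" "T (scaleC c x) = scaleC c (T x)"
    and "T 0 = 0" "T (- x) = - T x" "T (x - y) = T x - T y" "T (scaleR r x) = scaleR r (T x)"
proof -
  show "T (x + y) = T x + T y" "T (scaleC c x) = scaleC c (T x)"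
    using assms unfolding bounded_clinear_def by auto
  have "Modules.additive T"
    using assms by (simp add: Modules.additive_def bounded_clinear_def)
  then show "T 0 = 0" "T (- x) = - T x" "T (x - y) = T x - T y"
    by (simp_all add: additive.zero additive.minus additive.diff)
  show "T (scaleR r x) = scaleR r (T x)"
    using assms unfolding bounded_clinear_def by (simp add: scaleR_scaleC)
qed

lemma bounded_clinear_bound:
  assumes "bounded_clinear T"
  obtains K where "K > 0" "\<And>x. norm (T x) \<le> K * norm x"
proof -
  obtain K where K: "\<And>x. norm (T x) \<le> norm x * K" using assms unfolding bounded_clinear_def by auto
  show ?thesis
  proof (rule that[of "max K 1"])
    show "norm (T x) \<le> max K 1 * norm x" for x
      using K[of x] by (metis max.cobounded1 mult.commute mult_left_mono norm_ge_zero order_trans)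
  qed simp
qed

lemma bounded_clinear_imp_bounded_linear:
  assumes "bounded_clinear T"
  shows "bounded_linear T"
proof -
  obtain K where "\<And>x. norm (T x) \<le> K * norm x" using bounded_clinear_bound[OF assms] by blast
  then show ?thesis
    by (intro bounded_linear_intro[where K=K]) (auto simp: bounded_clinear_simps[OF assms] mult.commute)
qed

lemma bounded_clinear_intro:
  assumes "\<And>x y. T (x + y) = T x + T y" "\<And>c x. T (scaleC c x) = scaleC c (T x)"
    and "\<And>x. norm (T x) \<le> K * norm x"
  shows "bounded_clinear T"
  unfolding bounded_clinear_def using assms by (metis mult.commute)

lemma bounded_clinear_ident: "bounded_clinear (\<lambda>x::'a::chilbert. x)"
  by (rule bounded_clinear_intro[where K=1]) auto

lemma bounded_clinear_compose:
  assumes S: "bounded_clinear S" and T: "bounded_clinear T"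
  shows "bounded_clinear (S \<circ> T)"
proof -
  obtain K1 where K1: "\<And>x. norm (S x) \<le> K1 * norm x" "K1 > 0" using bounded_clinear_bound[OF S] by metis
  obtain K2 where K2: "\<And>x. norm (T x) \<le> K2 * norm x" using bounded_clinear_bound[OF T] by metis
  have "norm (S (T x)) \<le> (K1 * K2) * norm x" for x
  proof -
    have "norm (S (T x)) \<le> K1 * norm (T x)" by (rule K1(1))
    also have "\<dots> \<le> K1 * (K2 * norm x)" using K1(2) K2 by (intro mult_left_mono) auto
    finally show ?thesis by (simp add: mult.assoc)
  qed
  then show ?thesis
    by (intro bounded_clinear_intro) (auto simp: bounded_clinear_simps[OF S] bounded_clinear_simps[OF T])
qed

lemma bounded_clinear_add:
  assumes S: "bounded_clinear S" and T: "bounded_clinear T"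
  shows "bounded_clinear (\<lambda>x. S x + T x)"
proof -
  obtain K1 where K1: "\<And>x. norm (S x) \<le> K1 * norm x" using bounded_clinear_bound[OF S] by metis
  obtain K2 where K2: "\<And>x. norm (T x) \<le> K2 * norm x" using bounded_clinear_bound[OF T] by metis
  have "norm (S x + T x) \<le> (K1 + K2) * norm x" for x
    using K1[of x] K2[of x] norm_triangle_ineq[of "S x" "T x"] by (simp add: distrib_right)
  then show ?thesis
    by (intro bounded_clinear_intro)
      (auto simp: bounded_clinear_simps[OF S] bounded_clinear_simps[OF T] scaleC_add_right)
qed

lemma bounded_clinear_scaleC:
  assumes T: "bounded_clinear T"
  shows "bounded_clinear (\<lambda>x. scaleC c (T x))"
proof -
  obtain K where K: "\<And>x. norm (T x) \<le> K * norm x" using bounded_clinear_bound[OF T] by metis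
  have "norm (scaleC c (T x)) \<le> (cmod c * K) * norm x" for x
    using mult_left_mono[OF K[of x], of "cmod c"] by (simp add: norm_scaleC mult.assoc)
  then show ?thesis
    by (intro bounded_clinear_intro[where K="cmod c * K"])
      (auto simp: bounded_clinear_simps[OF T] scaleC_add_right scaleC_scaleC mult.commute)
qed

lemma bounded_clinear_scaleR: "bounded_clinear T \<Longrightarrow> bounded_clinear (\<lambda>x. scaleR r (T x))"
  using bounded_clinear_scaleC[of T "of_real r"] by (simp add: scaleR_scaleC)

lemma bounded_clinear_diff:
  "bounded_clinear S \<Longrightarrow> bounded_clinear T \<Longrightarrow> bounded_clinear (\<lambda>x. S x - T x)"
  using bounded_clinear_add[of S "\<lambda>x. scaleR (-1) (T x)"] bounded_clinear_scaleR[of T "-1"] by simp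

lemma bounded_clinear_funpow: "bounded_clinear S \<Longrightarrow> bounded_clinear (S ^^ n)"
  by (induction n) (auto simp: id_def bounded_clinear_ident bounded_clinear_compose simp del: comp_apply)

definition selfadjoint_op :: "('a::chilbert \<Rightarrow> 'a) \<Rightarrow> bool" where
  "selfadjoint_op S \<longleftrightarrow> (\<forall>x y. cinner (S x) y = cinner x (S y))"

lemma selfadjoint_op_Im_cinner:
  assumes "selfadjoint_op T"
  shows "Im (cinner (T x) x) = 0"
proof -
  have "cinner (T x) x = cnj (cinner (T x) x)"
    using assms unfolding selfadjoint_op_def by (metis cinner_commute)
  then have "Im (cinner (T x) x) = Im (cnj (cinner (T x) x))" by (rule arg_cong)
  then show ?thesis by simp
qed

lemma positive_op_bounded_clinear: "positive_op T \<Longrightarrow> bounded_clinear T"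
  unfolding positive_op_def by blast

lemma positive_op_Re_cinner_nonneg: "positive_op T \<Longrightarrow> 0 \<le> Re (cinner (T x) x)"
  unfolding positive_op_def by blast

lemma positive_op_selfadjoint:
  assumes "positive_op K"
  shows "selfadjoint_op K"
  unfolding selfadjoint_op_def
proof (intro allI)
  fix x y
  have K: "bounded_clinear K" and real: "\<And>z. Im (cinner (K z) z) = 0"
    using assms unfolding positive_op_def by auto
  define u where "u = cinner (K x) y"
  define v where "v = cinner (K y) x"
  have "Im (cinner (K (x + y)) (x + y)) = 0" by (rule real)
  then have Im: "Im (u + v) = 0"
    using real[of x] real[of y] by (simp add: bounded_clinear_simps[OF K] cinner_simps u_def v_def)
  have "Im (cinner (K (x + scaleC \<i> y)) (x + scaleC \<i> y)) = 0" by (rule real)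
  then have "Im (cinner (K x) x + \<i> * u - \<i> * v + cinner (K y) y) = 0"
    by (simp add: bounded_clinear_simps[OF K] cinner_simps u_def v_def algebra_simps)
  then have Re: "Re (u - v) = 0" using real[of x] real[of y] by simp
  have "v = cnj u" using Im Re by (simp add: complex_eq_iff)
  then show "cinner (K x) y = cinner x (K y)" by (metis cinner_commute complex_cnj_cnj u_def v_def)
qed

lemma quadratic_nonneg_imp_le:
  fixes a b c :: real
  assumes "b \<ge> 0" "c \<ge> 0" "\<And>s. 0 \<le> a - 2 * s * b + s^2 * b * c"
  shows "b \<le> a * c"
proof (cases "b = 0")
  case True then show ?thesis using assms(3)[of 0] assms(2) by simp
next
  case False
  then have b: "b > 0" using assms(1) by simp
  show ?thesis
  proof (cases "c = 0")
    case True
    then have "0 \<le> a - 2 * ((a + 1) / (2 * b)) * b" using assms(3)[of "(a + 1) / (2 * b)"] by simp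
    then show ?thesis using b by (simp add: field_simps)
  next
    case False
    then have c: "c > 0" using assms(2) by simp
    have "0 \<le> a - 2 * (1 / c) * b + (1 / c)^2 * b * c" by (rule assms(3))
    then show ?thesis using c by (simp add: field_simps power2_eq_square)
  qed
qed

lemma positive_op_Cauchy_Schwarz:
  assumes "positive_op K"
  shows "(cmod (cinner (K x) y))^2 \<le> Re (cinner (K x) x) * Re (cinner (K y) y)"
proof -
  have K: "bounded_clinear K" and real: "\<And>z. Im (cinner (K z) z) = 0"
    and nonneg: "\<And>z. 0 \<le> Re (cinner (K z) z)"
    using assms unfolding positive_op_def by auto
  define c where "c = cinner (K x) y"
  have yx: "cinner (K y) x = cnj c"
    unfolding c_def by (metis positive_op_selfadjoint[OF assms] selfadjoint_op_def cinner_commute)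
  have "0 \<le> Re (cinner (K x) x) - 2 * s * (cmod c)^2 + s^2 * (cmod c)^2 * Re (cinner (K y) y)" for s
  proof -
    define t where "t = - (of_real s * cnj c)"
    have "0 \<le> Re (cinner (K (x + scaleC t y)) (x + scaleC t y))" by (rule nonneg)
    also have "cinner (K (x + scaleC t y)) (x + scaleC t y)
       = cinner (K x) x + t * c + cnj t * cnj c + cnj t * t * cinner (K y) y"
      by (simp add: bounded_clinear_simps[OF K] cinner_simps c_def yx algebra_simps)
    also have "t * c = - of_real (s * (cmod c)^2)"
      unfolding t_def using cnj_mult_self[of c] by (simp add: mult.assoc)
    also have "cnj t * cnj c = - of_real (s * (cmod c)^2)"
      unfolding t_def using mult_cnj_self[of c] by (simp add: mult.assoc)
    also have "cnj t * t = of_real (s^2 * (cmod c)^2)"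
      using mult_cnj_self[of c] by (simp add: t_def power2_eq_square mult_ac)
    finally show ?thesis using real[of y] by (simp add: algebra_simps)
  qed
  then have "(cmod c)^2 \<le> Re (cinner (K x) x) * Re (cinner (K y) y)"
    by (intro quadratic_nonneg_imp_le) (auto simp: nonneg)
  then show ?thesis by (simp add: c_def)
qed

lemma positive_op_ident: "positive_op (\<lambda>x::'a::chilbert. x)"
  unfolding positive_op_def by (auto simp: bounded_clinear_ident cinner_self_real cinner_self_nonneg)

lemma cinner_Cauchy_Schwarz: "cmod (cinner x y) \<le> norm x * norm (y::'a::chilbert)"
proof -
  have "(cmod (cinner x y))^2 \<le> (norm x * norm y)^2"
    using positive_op_Cauchy_Schwarz[OF positive_op_ident, of x y]
    by (simp add: Re_cinner_self power_mult_distrib)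
  then show ?thesis by (rule power2_le_imp_le) simp
qed

lemma bounded_linear_cinner_left: "bounded_linear (\<lambda>v. cinner v (y::'a::chilbert))"
  by (rule bounded_linear_intro[where K="norm y"])
    (auto simp: cinner_simps scaleR_conv_of_real cinner_Cauchy_Schwarz)

lemma minimal_norm_imp_orthogonal:
  assumes "\<And>t. norm z \<le> norm (z + scaleC t (y::'a::chilbert))"
  shows "cinner z y = 0"
proof -
  define c where "c = cinner z y"
  have "0 \<le> 0 - 2 * s * (cmod c)^2 + s^2 * (cmod c)^2 * (norm y)^2" for s
  proof -
    define t where "t = - (of_real s * cnj c)"
    have "(norm z)^2 \<le> (norm (z + scaleC t y))^2" using assms[of t] by (simp add: power_mono)
    also have "\<dots> = (norm z)^2 + Re (t * c) + Re (cnj t * cnj c) + (cmod t)^2 * (norm y)^2"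
      unfolding norm_add_scaleC_power2 c_def by (metis cinner_commute)
    also have "t * c = - of_real (s * (cmod c)^2)"
      unfolding t_def using cnj_mult_self[of c] by (simp add: mult.assoc)
    also have "cnj t * cnj c = - of_real (s * (cmod c)^2)"
      unfolding t_def using mult_cnj_self[of c] by (simp add: mult.assoc)
    also have "(cmod t)^2 = s^2 * (cmod c)^2"
      by (simp add: t_def norm_mult power_mult_distrib)
    finally show ?thesis by simp
  qed
  then have "(cmod c)^2 \<le> 0 * (norm y)^2"
    by (intro quadratic_nonneg_imp_le) auto
  then show ?thesis by (simp add: c_def)
qed

section \<open>Riesz representation and the adjoint\<close>

lemma bounded_linear_cinner_right: "bounded_linear (\<lambda>v. cinner (y::'a::chilbert) v)"
proof (rule bounded_linear_intro[where K="norm y"])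
  show "norm (cinner y v) \<le> norm v * norm y" for v
    using cinner_Cauchy_Schwarz[of y v] by (simp add: mult.commute)
qed (auto simp: cinner_simps scaleR_conv_of_real)

lemma minimizing_sequence_Cauchy:
  fixes X :: "nat \<Rightarrow> 'a::chilbert"
  assumes mid: "\<And>m n. 2 * d \<le> norm (X m + X n)" and d: "0 \<le> d"
    and lim: "(\<lambda>n. norm (X n)) \<longlonglongrightarrow> d"
  shows "Cauchy X"
proof (rule metric_CauchyI)
  fix e :: real
  assume e: "0 < e"
  have "(\<lambda>n. (norm (X n))^2) \<longlonglongrightarrow> d^2" using lim by (rule tendsto_power)
  then have "eventually (\<lambda>n. (norm (X n))^2 < d^2 + e^2 / 4) sequentially"
    using e by (intro order_tendstoD) auto
  then obtain N where N: "\<And>n. N \<le> n \<Longrightarrow> (norm (X n))^2 < d^2 + e^2 / 4"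
    by (auto simp: eventually_sequentially)
  have "dist (X m) (X n) < e" if "N \<le> m" "N \<le> n" for m n
  proof -
    have "(2 * d)^2 \<le> (norm (X m + X n))^2" using mid d by (intro power_mono) auto
    then have "4 * d^2 \<le> (norm (X m + X n))^2" by (simp add: power_mult_distrib)
    then have "(norm (X m - X n))^2 < e^2"
      using parallelogram_law[of "X m" "X n"] N[OF that(1)] N[OF that(2)] by linarith
    then show ?thesis using e by (simp add: dist_norm power_less_imp_less_base)
  qed
  then show "\<exists>M. \<forall>m\<ge>M. \<forall>n\<ge>M. dist (X m) (X n) < e" by blast
qed

lemma hyperplane_min_norm_exists:
  assumes f: "bounded_linear f" and hom: "\<And>c x. f (scaleC c x) = c * f x" and x0: "f x0 \<noteq> 0"
  obtains z where "f z = 1" "\<And>x. f x = 1 \<Longrightarrow> norm z \<le> norm (x::'a::chilbert)"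
proof -
  define M where "M = {x. f x = 1}"
  have "scaleC (1 / f x0) x0 \<in> M" using x0 by (simp add: M_def hom)
  then have nonempty: "norm ` M \<noteq> {}" by blast
  define d where "d = Inf (norm ` M)"
  have bdd: "bdd_below (norm ` M)" by (auto intro: bdd_belowI[of _ 0])
  have d_le: "d \<le> norm x" if "x \<in> M" for x
    unfolding d_def using bdd that by (simp add: cInf_lower)
  have d: "0 \<le> d" unfolding d_def using nonempty by (auto intro: cInf_greatest)
  have "d \<in> closure (norm ` M)" unfolding d_def by (rule closure_contains_Inf[OF nonempty bdd])
  then obtain v where v: "\<And>n. v n \<in> norm ` M" and lim: "v \<longlonglongrightarrow> d"
    unfolding closure_sequential by blast
  have "\<forall>n. \<exists>x. x \<in> M \<and> norm x = v n" using v by (metis imageE)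
  then obtain X where X: "\<forall>n. X n \<in> M \<and> norm (X n) = v n" by (rule choice[THEN exE])
  then have XM: "\<And>n. X n \<in> M" and lim: "(\<lambda>n. norm (X n)) \<longlonglongrightarrow> d" using lim by simp_all
  have mid: "2 * d \<le> norm (X m + X n)" for m n
  proof -
    have "f (X m + X n) = f (X m) + f (X n)" using f by (simp add: bounded_linear.linear linear_add)
    then have "scaleC (1/2) (X m + X n) \<in> M"
      using XM[of m] XM[of n] by (simp add: M_def hom)
    then have "d \<le> norm (scaleC (1/2) (X m + X n))" by (rule d_le)
    then show ?thesis by (simp add: norm_scaleC)
  qed
  have "Cauchy X" by (rule minimizing_sequence_Cauchy[OF mid d lim])
  then obtain z where z: "X \<longlonglongrightarrow> z" using Cauchy_convergent_iff convergent_def by blast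
  show ?thesis
  proof (rule that)
    have "(\<lambda>n. f (X n)) \<longlonglongrightarrow> f z" using bounded_linear.tendsto[OF f z] .
    moreover have "f (X n) = 1" for n using XM[of n] by (simp add: M_def)
    ultimately show "f z = 1" by (simp add: LIMSEQ_const_iff)
    have "norm z = d" using tendsto_norm[OF z] lim by (rule LIMSEQ_unique)
    then show "norm z \<le> norm x" if "f x = 1" for x using d_le that by (simp add: M_def)
  qed
qed

lemma Riesz_representation:
  assumes f: "bounded_linear f" and hom: "\<And>c x. f (scaleC c x) = c * f x"
  obtains z where "\<And>x. f x = cinner z (x::'a::chilbert)"
proof (cases "\<forall>x. f x = 0")
  case True then show ?thesis using that[of 0] by simp
next
  case False
  then obtain x0 where "f x0 \<noteq> 0" by blast
  then obtain z where fz: "f z = 1" and zmin: "\<And>x. f x = 1 \<Longrightarrow> norm z \<le> norm x"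
    using hyperplane_min_norm_exists[OF f hom] by blast
  have add: "f (x + y) = f x + f y" for x y using f by (simp add: bounded_linear.linear linear_add)
  have "z \<noteq> 0" using fz hom[of 0 0] by auto
  \<comment> \<open>The point z of least norm in the hyperplane f = 1 is orthogonal to the kernel of f.\<close>
  have "f x = cinner (scaleC (of_real (1 / (norm z)^2)) z) x" for x
  proof -
    have "f (x - scaleC (f x) z) = 0"
      using add[of "x - scaleC (f x) z" "scaleC (f x) z"] by (simp add: hom fz)
    then have "cinner z (x - scaleC (f x) z) = 0"
      by (intro minimal_norm_imp_orthogonal zmin) (simp add: add hom fz)
    then have "cinner z x = f x * of_real ((norm z)^2)"
      by (simp add: cinner_simps cinner_self)
    then show ?thesis using \<open>z \<noteq> 0\<close> by (simp add: cinner_simps field_simps)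
  qed
  then show ?thesis by (rule that)
qed

lemma adjoint_exists:
  assumes T: "bounded_clinear T"
  shows "\<exists>S. bounded_clinear S \<and> (\<forall>x y. cinner (T x) y = cinner x (S y))"
proof -
  obtain K where "K > 0" and K: "\<And>x. norm (T x) \<le> K * norm x" using bounded_clinear_bound[OF T] by metis
  have "\<exists>z. \<forall>x. cinner y (T x) = cinner z x" for y
    by (rule Riesz_representation[OF bounded_linear_compose[OF bounded_linear_cinner_right
          bounded_clinear_imp_bounded_linear[OF T]]])
      (auto simp: bounded_clinear_simps[OF T] cinner_simps)
  then obtain S where S: "\<And>y x. cinner y (T x) = cinner (S y) x" by metis
  have S': "cinner (T x) y = cinner x (S y)" for x y
    by (metis S cinner_commute)
  have "norm (S y) \<le> K * norm y" for y
  proof -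
    have "(norm (S y))^2 = Re (cinner (T (S y)) y)" by (simp add: S' Re_cinner_self)
    also have "\<dots> \<le> norm (T (S y)) * norm y"
      using complex_Re_le_cmod cinner_Cauchy_Schwarz order_trans by blast
    also have "\<dots> \<le> (K * norm (S y)) * norm y" using K by (intro mult_right_mono) auto
    finally have "norm (S y) * norm (S y) \<le> norm (S y) * (K * norm y)"
      by (simp add: power2_eq_square mult_ac)
    then show ?thesis by (cases "norm (S y) = 0") (use \<open>K > 0\<close> in \<open>auto simp: mult_le_cancel_left\<close>)
  qed
  moreover have "S (y1 + y2) = S y1 + S y2" "S (scaleC c y) = scaleC c (S y)" for y1 y2 c y
    by (rule cinner_ext, simp add: S'[symmetric] cinner_simps)+
  ultimately have "bounded_clinear S" by (intro bounded_clinear_intro)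
  then show ?thesis using S' by blast
qed

lemma adj_eqI:
  assumes "\<And>x y. cinner (T x) y = cinner x (S y)"
  shows "adj T = S"
  unfolding adj_def
proof (rule the_equality)
  fix S' assume "\<forall>x y. cinner (T x) y = cinner x (S' y)"
  then show "S' = S" using assms by (intro ext cinner_ext) metis
qed (use assms in blast)

lemma
  assumes "bounded_clinear T"
  shows bounded_clinear_adj: "bounded_clinear (adj T)"
    and cinner_adj_right: "cinner (T x) y = cinner x (adj T y)"
  using adjoint_exists[OF assms] adj_eqI by metis+

lemma cinner_adj_left: "bounded_clinear T \<Longrightarrow> cinner (adj T x) y = cinner x (T y)"
  by (metis cinner_adj_right cinner_commute)

lemma adj_adj: "bounded_clinear T \<Longrightarrow> adj (adj T) = T"
  by (rule adj_eqI) (rule cinner_adj_left)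

section \<open>Cauchy products for bilinear maps\<close>

lemma has_sum_suminf_of_summable_norm:
  fixes f :: "nat \<Rightarrow> 'a::banach"
  assumes "summable (\<lambda>k. norm (f k))"
  shows "(f has_sum (\<Sum>k. f k)) UNIV"
  using norm_summable_imp_has_sum[OF assms summable_sums[OF summable_norm_cancel[OF assms]]] .

lemma summable_on_bilinear_product:
  fixes prod :: "'a::real_normed_vector \<Rightarrow> 'b::real_normed_vector \<Rightarrow> 'c::banach"
  assumes bil: "bounded_bilinear prod"
    and a: "summable (\<lambda>k. norm (a k))" and b: "summable (\<lambda>k. norm (b k))"
  shows "(\<lambda>(i, j). prod (a i) (b j)) summable_on UNIV \<times> UNIV"
proof -
  obtain K where K0: "0 \<le> K" and K: "\<And>x y. norm (prod x y) \<le> norm x * norm y * K"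
    using bounded_bilinear.nonneg_bounded[OF bil] by blast
  have norm_a: "((\<lambda>k. norm (a k)) has_sum (\<Sum>k. norm (a k))) UNIV"
    using has_sum_suminf_of_summable_norm[of "\<lambda>k. norm (a k)"] a by simp
  have norm_b: "((\<lambda>k. norm (b k)) has_sum (\<Sum>k. norm (b k))) UNIV"
    using has_sum_suminf_of_summable_norm[of "\<lambda>k. norm (b k)"] b by simp
  have "(\<lambda>(i, j). norm (a i) * norm (b j) * K) summable_on UNIV \<times> UNIV"
  proof (rule summable_on_SigmaI[where g="\<lambda>i. norm (a i) * (\<Sum>k. norm (b k)) * K"], goal_cases)
    case (1 i)
    show ?case using has_sum_cmult_left[OF has_sum_cmult_right[OF norm_b, of "norm (a i)"], of K] by simp
  next
    case 2
    show ?case using has_sum_cmult_left[OF norm_a, of "(\<Sum>k. norm (b k)) * K"]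
      by (auto simp: summable_on_def mult.assoc)
  next
    case (3 i j)
    show ?case using K0 by simp
  qed
  then have "(\<lambda>p. norm (case p of (i, j) \<Rightarrow> prod (a i) (b j))) summable_on UNIV \<times> UNIV"
    by (rule Infinite_Sum.abs_summable_on_comparison_test') (auto simp: K)
  then show ?thesis by (rule abs_summable_summable)
qed

lemma Cauchy_product_sums_bilinear:
  fixes prod :: "'a::banach \<Rightarrow> 'b::banach \<Rightarrow> 'c::banach"
  assumes bil: "bounded_bilinear prod"
    and a: "summable (\<lambda>k. norm (a k))" and b: "summable (\<lambda>k. norm (b k))"
  shows "(\<lambda>k. \<Sum>i\<le>k. prod (a i) (b (k - i))) sums prod (\<Sum>k. a k) (\<Sum>k. b k)"
proof -
  interpret bounded_bilinear prod by (fact bil)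
  have "((\<lambda>(i, j). prod (a i) (b j)) has_sum prod (\<Sum>k. a k) (\<Sum>k. b k)) (UNIV \<times> UNIV)"
  proof (rule has_sum_SigmaI[where g="\<lambda>i. prod (a i) (\<Sum>k. b k)",
        OF _ _ summable_on_bilinear_product[OF bil a b]])
    show "((\<lambda>i. prod (a i) (\<Sum>k. b k)) has_sum prod (\<Sum>k. a k) (\<Sum>k. b k)) UNIV"
      by (rule has_sum_bounded_linear[OF bounded_linear_left has_sum_suminf_of_summable_norm[OF a]])
    show "((\<lambda>j. case (i, j) of (i, j) \<Rightarrow> prod (a i) (b j)) has_sum prod (a i) (\<Sum>k. b k)) UNIV" for i
      using has_sum_bounded_linear[OF bounded_linear_right has_sum_suminf_of_summable_norm[OF b]] by simp
  qed
  also have "?this \<longleftrightarrow> ((\<lambda>(k, i). prod (a i) (b (k - i))) has_sum prod (\<Sum>k. a k) (\<Sum>k. b k))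
      (SIGMA k:UNIV. {..k})"
    by (rule has_sum_reindex_bij_witness[where i="\<lambda>(i, j). (i + j, i)" and j="\<lambda>(k, i). (i, k - i)",
          symmetric]) auto
  finally have "((\<lambda>k. \<Sum>i\<le>k. prod (a i) (b (k - i))) has_sum prod (\<Sum>k. a k) (\<Sum>k. b k)) UNIV"
    by (rule has_sum_SigmaD) auto
  then show ?thesis by (rule has_sum_imp_sums)
qed

section \<open>Power series of a contraction\<close>

definition contraction_op :: "('a::chilbert \<Rightarrow> 'a) \<Rightarrow> bool" where
  "contraction_op S \<longleftrightarrow> bounded_clinear S \<and> (\<forall>x. norm (S x) \<le> norm x)"

definition op_series :: "(nat \<Rightarrow> real) \<Rightarrow> ('a::chilbert \<Rightarrow> 'a) \<Rightarrow> 'a \<Rightarrow> 'a" where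
  "op_series a S x = (\<Sum>n. a n *\<^sub>R (S ^^ n) x)"

lemma bounded_clinear_funpow_contraction_op: "contraction_op S \<Longrightarrow> bounded_clinear (S ^^ n)"
  unfolding contraction_op_def by (blast intro: bounded_clinear_funpow)

lemma norm_funpow_contraction_op: "contraction_op S \<Longrightarrow> norm ((S ^^ n) x) \<le> norm x"
  by (induction n) (auto simp: contraction_op_def intro: order_trans)

lemma selfadjoint_op_funpow:
  assumes "selfadjoint_op S"
  shows "selfadjoint_op (S ^^ n)"
proof -
  have "cinner ((S ^^ n) x) y = cinner x ((S ^^ n) y)" for x y
  proof (induction n arbitrary: x y)
    case (Suc n)
    have "cinner ((S ^^ Suc n) x) y = cinner ((S ^^ n) x) (S y)"
      using assms by (simp add: selfadjoint_op_def)
    also have "\<dots> = cinner x ((S ^^ n) (S y))" by (rule Suc.IH)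
    also have "(S ^^ n) (S y) = (S ^^ Suc n) y" by (simp only: funpow_Suc_right comp_apply)
    finally show ?case .
  qed simp
  then show ?thesis by (simp add: selfadjoint_op_def)
qed

lemma summable_norm_op_series:
  assumes "contraction_op S" "summable (\<lambda>n. \<bar>a n\<bar>)"
  shows "summable (\<lambda>n. norm (a n *\<^sub>R (S ^^ n) x))"
proof (rule summable_comparison_test[where g="\<lambda>n. \<bar>a n\<bar> * norm x"])
  show "\<exists>N. \<forall>n\<ge>N. norm (norm (a n *\<^sub>R (S ^^ n) x)) \<le> \<bar>a n\<bar> * norm x"
    using norm_funpow_contraction_op[OF assms(1)] by (auto intro!: mult_left_mono)
  show "summable (\<lambda>n. \<bar>a n\<bar> * norm x)" using assms(2) by (rule summable_mult2)
qed

lemma summable_op_series: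
  assumes "contraction_op S" "summable (\<lambda>n. \<bar>a n\<bar>)"
  shows "summable (\<lambda>n. a n *\<^sub>R (S ^^ n) x)"
  using summable_norm_op_series[OF assms] by (rule summable_norm_cancel)

lemma norm_op_series_le:
  assumes "contraction_op S" "summable (\<lambda>n. \<bar>a n\<bar>)"
  shows "norm (op_series a S x) \<le> (\<Sum>n. \<bar>a n\<bar>) * norm x"
proof -
  have "norm (op_series a S x) \<le> (\<Sum>n. norm (a n *\<^sub>R (S ^^ n) x))"
    unfolding op_series_def using summable_norm_op_series[OF assms] by (rule summable_norm)
  also have "\<dots> \<le> (\<Sum>n. \<bar>a n\<bar> * norm x)"
    using norm_funpow_contraction_op[OF assms(1)] summable_norm_op_series[OF assms]
      summable_mult2[OF assms(2)]
    by (intro suminf_le) (auto intro!: mult_left_mono)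
  also have "\<dots> = (\<Sum>n. \<bar>a n\<bar>) * norm x" using assms(2) by (rule suminf_mult2[symmetric])
  finally show ?thesis .
qed

lemma op_series_commute:
  assumes "contraction_op S1" "contraction_op S2" "summable (\<lambda>n. \<bar>a n\<bar>)" "bounded_clinear B"
    and "\<And>x. B (S1 x) = S2 (B x)"
  shows "B (op_series a S1 x) = op_series a S2 (B x)"
proof -
  have "B ((S1 ^^ n) x) = (S2 ^^ n) (B x)" for n x
    by (induction n arbitrary: x) (auto simp: assms(5))
  moreover have "B (op_series a S1 x) = (\<Sum>n. B (a n *\<^sub>R (S1 ^^ n) x))"
    unfolding op_series_def
    by (rule bounded_linear.suminf[OF bounded_clinear_imp_bounded_linear[OF assms(4)]
          summable_op_series[OF assms(1,3)]])
  ultimately show ?thesis unfolding op_series_def by (simp add: bounded_clinear_simps[OF assms(4)])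
qed

lemma bounded_clinear_op_series:
  assumes "contraction_op S" "summable (\<lambda>n. \<bar>a n\<bar>)"
  shows "bounded_clinear (op_series a S)"
proof (rule bounded_clinear_intro)
  show "op_series a S (x + y) = op_series a S x + op_series a S y" for x y
    unfolding op_series_def
    by (simp add: suminf_add[OF summable_op_series[OF assms] summable_op_series[OF assms]]
        bounded_clinear_simps[OF bounded_clinear_funpow_contraction_op[OF assms(1)]] scaleR_add_right)
  have "bounded_linear (\<lambda>v::'a. scaleC c v)" for c
    by (rule bounded_linear_intro[where K="cmod c"])
      (auto simp: scaleC_add_right norm_scaleC scaleR_scaleC scaleC_scaleC mult.commute)
  then show "op_series a S (scaleC c x) = scaleC c (op_series a S x)" for c x
    unfolding op_series_def
    using bounded_linear.suminf[OF _ summable_op_series[OF assms], of "scaleC c" x]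
    by (simp add: bounded_clinear_simps[OF bounded_clinear_funpow_contraction_op[OF assms(1)]]
        scaleR_scaleC scaleC_scaleC mult.commute)
  show "norm (op_series a S x) \<le> (\<Sum>n. \<bar>a n\<bar>) * norm x" for x
    by (rule norm_op_series_le[OF assms])
qed

lemma cinner_op_series_sums:
  assumes "contraction_op S" "summable (\<lambda>n. \<bar>a n\<bar>)"
  shows "(\<lambda>n. of_real (a n) * cinner ((S ^^ n) x) y) sums cinner (op_series a S x) y"
  using bounded_linear.sums[OF bounded_linear_cinner_left[of y]
      summable_sums[OF summable_op_series[OF assms, of x]]]
  by (simp add: op_series_def cinner_simps)

lemma selfadjoint_op_series:
  assumes "contraction_op S" "summable (\<lambda>n. \<bar>a n\<bar>)" "selfadjoint_op S"
  shows "selfadjoint_op (op_series a S)"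
  unfolding selfadjoint_op_def
proof (intro allI)
  fix x y
  have "(\<lambda>n. cnj (of_real (a n) * cinner ((S ^^ n) y) x)) sums cnj (cinner (op_series a S y) x)"
    using cinner_op_series_sums[OF assms(1,2)] by (rule sums_cnj[THEN iffD2])
  then have "(\<lambda>n. of_real (a n) * cinner ((S ^^ n) x) y) sums cinner x (op_series a S y)"
    using selfadjoint_op_funpow[OF assms(3)]
    by (simp add: selfadjoint_op_def cinner_commute[of _ x] cinner_commute[of y])
  then show "cinner (op_series a S x) y = cinner x (op_series a S y)"
    using cinner_op_series_sums[OF assms(1,2)] sums_unique2 by blast
qed

lemma op_series_finite:
  assumes "\<And>n. n \<ge> N \<Longrightarrow> a n = 0"
  shows "op_series a S x = (\<Sum>n<N. a n *\<^sub>R (S ^^ n) x)"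
  unfolding op_series_def by (rule suminf_finite) (auto simp: assms)

lemma op_series_geometric:
  assumes S: "contraction_op S" and r: "\<bar>r\<bar> < 1"
  shows "op_series (\<lambda>n. r ^ n) S x - r *\<^sub>R S (op_series (\<lambda>n. r ^ n) S x) = x"
proof -
  define f where "f n = r ^ n *\<^sub>R (S ^^ n) x" for n
  have "summable (\<lambda>n. \<bar>r ^ n\<bar>)" using r by (simp add: power_abs summable_geometric)
  then have summable: "summable f" unfolding f_def by (rule summable_op_series[OF S])
  have Sb: "bounded_clinear S" using S by (simp add: contraction_op_def)
  note S_linear = bounded_clinear_imp_bounded_linear[OF Sb]
  have "f (Suc n) = r *\<^sub>R S (f n)" for n by (simp add: f_def bounded_clinear_simps[OF Sb])
  then have "suminf f - f 0 = r *\<^sub>R (\<Sum>n. S (f n))"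
    using suminf_split_head[OF summable] suminf_scaleR_right[OF bounded_linear.summable[OF S_linear summable]]
    by simp
  also have "(\<Sum>n. S (f n)) = S (suminf f)" by (rule bounded_linear.suminf[OF S_linear summable, symmetric])
  moreover have "f 0 = x" by (simp add: f_def)
  ultimately show ?thesis by (simp add: op_series_def f_def[symmetric] algebra_simps)
qed

lemma blinfun_apply_Blinfun_funpow:
  "contraction_op S \<Longrightarrow> blinfun_apply (Blinfun (S ^^ n)) = S ^^ n"
  by (intro bounded_linear_Blinfun_apply bounded_clinear_imp_bounded_linear bounded_clinear_funpow_contraction_op)

lemma summable_norm_Blinfun_funpow:
  assumes S: "contraction_op S" and c: "summable (\<lambda>n. \<bar>c n\<bar>)"
  shows "summable (\<lambda>n. norm (c n *\<^sub>R Blinfun (S ^^ n)))"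
proof (rule summable_comparison_test'[OF c])
  have "norm (Blinfun (S ^^ n)) \<le> 1" for n
    by (rule norm_blinfun_bound) (auto simp: blinfun_apply_Blinfun_funpow[OF S] norm_funpow_contraction_op[OF S])
  then show "norm (norm (c n *\<^sub>R Blinfun (S ^^ n))) \<le> \<bar>c n\<bar>" for n
    by (simp add: mult_left_le)
qed

lemma blinfun_apply_suminf_Blinfun_funpow:
  assumes S: "contraction_op S" and c: "summable (\<lambda>n. c n *\<^sub>R Blinfun (S ^^ n))"
  shows "blinfun_apply (\<Sum>n. c n *\<^sub>R Blinfun (S ^^ n)) v = op_series c S v"
  using bounded_linear.suminf[OF bounded_bilinear.bounded_linear_left[OF bounded_bilinear_blinfun_apply] c]
  by (simp add: op_series_def blinfun_apply_Blinfun_funpow[OF S] blinfun.scaleR_left)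

lemma sum_compose_Blinfun_funpow:
  assumes S: "contraction_op S"
  shows "(\<Sum>i\<le>k. (a i *\<^sub>R Blinfun (S ^^ i)) o\<^sub>L (b (k - i) *\<^sub>R Blinfun (S ^^ (k - i))))
    = (\<Sum>i\<le>k. a i * b (k - i)) *\<^sub>R Blinfun (S ^^ k)"
proof (rule blinfun_eqI)
  fix v
  have "(S ^^ i) ((S ^^ (k - i)) v) = (S ^^ k) v" if "i \<le> k" for i
    using that by (metis comp_apply funpow_add le_add_diff_inverse)
  then have "blinfun_apply (\<Sum>i\<le>k. (a i *\<^sub>R Blinfun (S ^^ i)) o\<^sub>L (b (k - i) *\<^sub>R Blinfun (S ^^ (k - i)))) v
      = (\<Sum>i\<le>k. (a i * b (k - i)) *\<^sub>R (S ^^ k) v)"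
    unfolding blinfun.sum_left
    by (intro sum.cong) (simp_all add: blinfun_apply_Blinfun_funpow[OF S] blinfun.scaleR_left
        bounded_clinear_simps(6)[OF bounded_clinear_funpow_contraction_op[OF S]])
  then show "blinfun_apply (\<Sum>i\<le>k. (a i *\<^sub>R Blinfun (S ^^ i)) o\<^sub>L (b (k - i) *\<^sub>R Blinfun (S ^^ (k - i)))) v
      = blinfun_apply ((\<Sum>i\<le>k. a i * b (k - i)) *\<^sub>R Blinfun (S ^^ k)) v"
    by (simp add: blinfun_apply_Blinfun_funpow[OF S] blinfun.scaleR_left blinfun.sum_left scaleR_sum_left)
qed

text \<open>The composition is computed in the Banach space of bounded operators, where the series
  converge absolutely and the Cauchy product applies.\<close>

lemma op_series_compose:
  assumes S: "contraction_op S" and a: "summable (\<lambda>n. \<bar>a n\<bar>)" and b: "summable (\<lambda>n. \<bar>b n\<bar>)"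
  shows "op_series a S (op_series b S x) = op_series (\<lambda>k. \<Sum>i\<le>k. a i * b (k - i)) S x"
proof -
  define L where "L c = (\<Sum>n. c n *\<^sub>R Blinfun (S ^^ n))" for c
  have "(\<lambda>k. (\<Sum>i\<le>k. a i * b (k - i)) *\<^sub>R Blinfun (S ^^ k)) sums (L a o\<^sub>L L b)"
    using Cauchy_product_sums_bilinear[OF bounded_bilinear_blinfun_compose
        summable_norm_Blinfun_funpow[OF S a] summable_norm_Blinfun_funpow[OF S b]]
    by (simp add: sum_compose_Blinfun_funpow[OF S] L_def)
  then have summable: "summable (\<lambda>k. (\<Sum>i\<le>k. a i * b (k - i)) *\<^sub>R Blinfun (S ^^ k))"
    and product: "L a o\<^sub>L L b = L (\<lambda>k. \<Sum>i\<le>k. a i * b (k - i))"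
    by (simp_all add: sums_iff L_def)
  have "op_series (\<lambda>k. \<Sum>i\<le>k. a i * b (k - i)) S x = blinfun_apply (L (\<lambda>k. \<Sum>i\<le>k. a i * b (k - i))) x"
    unfolding L_def by (rule blinfun_apply_suminf_Blinfun_funpow[OF S summable, symmetric])
  also have "\<dots> = blinfun_apply (L a o\<^sub>L L b) x" by (simp only: product)
  also have "\<dots> = op_series a S (op_series b S x)"
    using blinfun_apply_suminf_Blinfun_funpow[OF S summable_norm_cancel[OF summable_norm_Blinfun_funpow[OF S a]]]
      blinfun_apply_suminf_Blinfun_funpow[OF S summable_norm_cancel[OF summable_norm_Blinfun_funpow[OF S b]]]
    by (simp add: L_def)
  finally show ?thesis by simp
qed

section \<open>Positive square roots\<close>

definition sqrt_coeff :: "nat \<Rightarrow> real" where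
  "sqrt_coeff n = ((1/2::real) gchoose n) * (-1)^n"

lemma sqrt_coeff_0 [simp]: "sqrt_coeff 0 = 1"
  by (simp add: sqrt_coeff_def)

lemma sqrt_coeff_nonpos:
  assumes "n \<ge> 1"
  shows "sqrt_coeff n \<le> 0"
proof -
  obtain m where n: "n = Suc m" using assms by (cases n) auto
  have "((1/2::real) gchoose n) = (-1)^n * ((of_nat n - 3/2) gchoose n)"
    using gbinomial_negated_upper[of "1/2::real" n] by simp
  then have "sqrt_coeff n = ((of_nat n - 3/2) gchoose n)"
    by (simp add: sqrt_coeff_def mult_ac power_mult_distrib[symmetric])
  also have "\<dots> = (\<Prod>i<m. (of_nat (Suc m) - 3/2 - of_nat i) / of_nat (Suc m - i))
        * ((of_nat (Suc m) - 3/2 - of_nat m) / of_nat (Suc m - m))"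
    by (simp add: n gbinomial_altdef_of_nat atLeast0LessThan[symmetric] prod.atLeast0_lessThan_Suc)
  also have "\<dots> \<le> 0"
  proof (rule mult_nonneg_nonpos)
    show "0 \<le> (\<Prod>i<m. (of_nat (Suc m) - 3/2 - of_nat i) / of_nat (Suc m - i) :: real)"
      by (rule prod_nonneg) auto
  qed simp
  finally show ?thesis .
qed

lemma sum_sqrt_coeff_nonneg: "0 \<le> (\<Sum>k\<le>N. sqrt_coeff k)"
proof -
  have "(\<Sum>k\<le>N. sqrt_coeff k) = (-1)^N * ((1/2 - 1) gchoose N)"
    unfolding sqrt_coeff_def by (rule gbinomial_sum_lower_neg)
  also have "((1/2 - 1::real) gchoose N) = (-1)^N * ((of_nat N - 1/2) gchoose N)"
    using gbinomial_negated_upper[of "1/2 - 1::real" N] by simp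
  finally have "(\<Sum>k\<le>N. sqrt_coeff k) = ((of_nat N - 1/2) gchoose N)"
    by (simp add: power_mult_distrib[symmetric])
  also have "\<dots> = (\<Prod>i = 0..<N. (of_nat N - 1/2 - of_nat i) / of_nat (N - i))"
    by (rule gbinomial_altdef_of_nat)
  also have "\<dots> \<ge> 0"
    by (rule prod_nonneg) auto
  finally show ?thesis .
qed

lemma sqrt_coeff_convolution:
  "(\<Sum>i\<le>k. sqrt_coeff i * sqrt_coeff (k - i)) = (if k = 0 then 1 else if k = 1 then -1 else 0)"
proof -
  have "(\<Sum>i\<le>k. sqrt_coeff i * sqrt_coeff (k - i))
      = (-1)^k * (\<Sum>i\<le>k. ((1/2::real) gchoose i) * ((1/2) gchoose (k - i)))"
    unfolding sum_distrib_left
  proof (rule sum.cong)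
    fix i assume "i \<in> {..k}"
    then have "(-1::real)^i * (-1)^(k - i) = (-1)^k" by (simp flip: power_add)
    then show "sqrt_coeff i * sqrt_coeff (k - i) = (-1)^k * (((1/2::real) gchoose i) * ((1/2) gchoose (k - i)))"
      unfolding sqrt_coeff_def by (metis mult.commute mult.left_commute)
  qed simp
  also have "\<dots> = (-1)^k * ((1/2 + 1/2::real) gchoose k)"
    by (simp add: atMost_atLeast0 gbinomial_Vandermonde)
  also have "((1/2 + 1/2::real) gchoose k) = of_nat (1 choose k)"
    using binomial_gbinomial[of 1 k, where 'a=real] by simp
  finally show ?thesis
    by (cases k; cases "k - 1") auto
qed

lemma summable_abs_sqrt_coeff: "summable (\<lambda>n. \<bar>sqrt_coeff n\<bar>)"
proof (rule bounded_imp_summable[where B=2])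
  fix N
  have "(\<Sum>k\<le>N. \<bar>sqrt_coeff k\<bar>) = (\<Sum>k\<le>N. (if k = 0 then 2 else 0) - sqrt_coeff k)"
    using sqrt_coeff_nonpos by (intro sum.cong) (auto simp: not_less)
  also have "\<dots> = 2 - (\<Sum>k\<le>N. sqrt_coeff k)"
    by (simp add: sum_subtractf)
  finally show "(\<Sum>k\<le>N. \<bar>sqrt_coeff k\<bar>) \<le> 2" using sum_sqrt_coeff_nonneg[of N] by simp
qed simp

lemma suminf_sqrt_coeff_nonneg: "0 \<le> suminf sqrt_coeff"
proof (rule tendsto_lowerbound)
  show "(\<lambda>n. \<Sum>k<n. sqrt_coeff k) \<longlonglongrightarrow> suminf sqrt_coeff"
    using summable_abs_sqrt_coeff summable_rabs_cancel summable_LIMSEQ by blast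
  have "0 \<le> (\<Sum>k<n. sqrt_coeff k)" for n
    by (cases n) (auto simp: lessThan_Suc_atMost sum_sqrt_coeff_nonneg)
  then show "\<forall>\<^sub>F n in sequentially. 0 \<le> (\<Sum>k<n. sqrt_coeff k)" by simp
qed simp

lemma selfadjoint_op_norm_le:
  assumes S: "bounded_clinear S" "selfadjoint_op S" and c: "c \<ge> 0"
    and q: "\<And>x. \<bar>Re (cinner (S x) x)\<bar> \<le> c * (norm x)^2"
  shows "norm (S x) \<le> c * norm x"
proof (cases "S x = 0 \<or> x = 0")
  case True then show ?thesis using bounded_clinear_simps(3)[OF S(1)] c by auto
next
  case False
  then have Sx: "norm (S x) > 0" and x: "norm x > 0" by auto
  define r where "r = norm x / norm (S x)"
  define y where "y = r *\<^sub>R S x"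
  have r: "r > 0" using Sx x by (simp add: r_def)
  have ny: "norm y = norm x" using r Sx by (simp add: y_def r_def)
  have "cinner (S y) x = cnj (cinner (S x) y)"
    using S(2) unfolding selfadjoint_op_def by (metis cinner_commute)
  then have "Re (cinner (S y) x) = Re (cinner (S x) y)" by simp
  then have "Re (cinner (S (x + y)) (x + y)) - Re (cinner (S (x - y)) (x - y)) = 4 * Re (cinner (S x) y)"
    by (simp add: bounded_clinear_simps[OF S(1)] cinner_simps)
  also have "Re (cinner (S x) y) = norm x * norm (S x)"
    using Sx by (simp add: y_def cinner_simps cinner_self r_def power2_eq_square)
  finally have "4 * (norm x * norm (S x)) \<le> c * (norm (x + y))^2 + c * (norm (x - y))^2"
    using q[of "x + y"] q[of "x - y"] by linarith
  also have "\<dots> = c * (2 * (norm x)^2 + 2 * (norm y)^2)"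
    using parallelogram_law[of x y] by (metis distrib_left)
  also have "\<dots> = 4 * (norm x * (c * norm x))" by (simp add: ny power2_eq_square)
  finally show ?thesis using x by simp
qed

lemma Re_cinner_le_of_norm_le:
  assumes "\<And>x. norm (T x) \<le> lam * norm x"
  shows "Re (cinner (T x) x) \<le> lam * (norm x)^2"
proof -
  have "Re (cinner (T x) x) \<le> norm (T x) * norm x"
    using complex_Re_le_cmod cinner_Cauchy_Schwarz order_trans by blast
  also have "\<dots> \<le> lam * norm x * norm x" using assms by (intro mult_right_mono) auto
  finally show ?thesis by (simp add: power2_eq_square mult_ac)
qed

text \<open>For a positive T bounded by lam, T = lam (I - S) with the self-adjoint contraction
  S = compl_op lam T, so the square root of T is sqrt lam times the binomial series of
  sqrt (1 - t) evaluated at S.\<close>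

definition compl_op :: "real \<Rightarrow> ('a::chilbert \<Rightarrow> 'a) \<Rightarrow> 'a \<Rightarrow> 'a" where
  "compl_op lam T x = x - (1 / lam) *\<^sub>R T x"

definition op_sqrt :: "real \<Rightarrow> ('a::chilbert \<Rightarrow> 'a) \<Rightarrow> 'a \<Rightarrow> 'a" where
  "op_sqrt lam T x = sqrt lam *\<^sub>R op_series sqrt_coeff (compl_op lam T) x"

lemma
  assumes T: "positive_op T" and lam: "lam > 0" and bound: "\<And>x. norm (T x) \<le> lam * norm x"
  shows contraction_op_compl_op: "contraction_op (compl_op lam T)"
    and selfadjoint_op_compl_op: "selfadjoint_op (compl_op lam T)"
proof -
  have bcl: "bounded_clinear (compl_op lam T)"
    unfolding compl_op_def[abs_def]
    by (intro bounded_clinear_diff bounded_clinear_ident bounded_clinear_scaleR positive_op_bounded_clinear T)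
  show selfadjoint: "selfadjoint_op (compl_op lam T)"
    using positive_op_selfadjoint[OF T] by (simp add: selfadjoint_op_def compl_op_def cinner_simps)
  have "\<bar>Re (cinner (compl_op lam T x) x)\<bar> \<le> 1 * (norm x)^2" for x
  proof -
    have "Re (cinner (compl_op lam T x) x) = (norm x)^2 - (1 / lam) * Re (cinner (T x) x)"
      by (simp add: compl_op_def cinner_simps cinner_self)
    moreover have "0 \<le> Re (cinner (T x) x)" by (rule positive_op_Re_cinner_nonneg[OF T])
    moreover have "(1 / lam) * Re (cinner (T x) x) \<le> (1 / lam) * (lam * (norm x)^2)"
      using Re_cinner_le_of_norm_le[OF bound] lam by (intro mult_left_mono) auto
    ultimately show ?thesis using lam by (simp add: abs_le_iff)
  qed
  then have "norm (compl_op lam T x) \<le> 1 * norm x" for x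
    by (intro selfadjoint_op_norm_le[OF bcl selfadjoint]) auto
  then show "contraction_op (compl_op lam T)" using bcl unfolding contraction_op_def by simp
qed

lemma op_series_sqrt_coeff_square:
  assumes "contraction_op S"
  shows "op_series sqrt_coeff S (op_series sqrt_coeff S x) = x - S x"
proof -
  have "op_series sqrt_coeff S (op_series sqrt_coeff S x)
      = op_series (\<lambda>k. \<Sum>i\<le>k. sqrt_coeff i * sqrt_coeff (k - i)) S x"
    by (rule op_series_compose[OF assms summable_abs_sqrt_coeff summable_abs_sqrt_coeff])
  also have "\<dots> = (\<Sum>n<2. (\<Sum>i\<le>n. sqrt_coeff i * sqrt_coeff (n - i)) *\<^sub>R (S ^^ n) x)"
    by (rule op_series_finite) (simp add: sqrt_coeff_convolution)
  also have "\<dots> = x - S x"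
    by (simp add: sqrt_coeff_convolution numeral_2_eq_2)
  finally show ?thesis .
qed

text \<open>Since (S^n x, x) \<le> ||x||^2 and the coefficients after the first are nonpositive, the
  quadratic form is bounded below by (\<Sigma> sqrt_coeff n) ||x||^2, which is nonnegative.\<close>

lemma Re_cinner_op_series_sqrt_coeff_nonneg:
  assumes S: "contraction_op S"
  shows "0 \<le> Re (cinner (op_series sqrt_coeff S x) x)"
proof -
  have "(\<lambda>n. Re (of_real (sqrt_coeff n) * cinner ((S ^^ n) x) x)) sums Re (cinner (op_series sqrt_coeff S x) x)"
    by (rule sums_Re[OF cinner_op_series_sums[OF S summable_abs_sqrt_coeff]])
  then have lower: "(\<lambda>n. sqrt_coeff n * Re (cinner ((S ^^ n) x) x)) sums Re (cinner (op_series sqrt_coeff S x) x)"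
    by simp
  have upper: "(\<lambda>n. sqrt_coeff n * (norm x)^2) sums (suminf sqrt_coeff * (norm x)^2)"
    using summable_abs_sqrt_coeff summable_rabs_cancel by (intro sums_mult2 summable_sums) blast
  have "sqrt_coeff n * (norm x)^2 \<le> sqrt_coeff n * Re (cinner ((S ^^ n) x) x)" for n
  proof (cases "n = 0")
    case True then show ?thesis by (simp add: Re_cinner_self)
  next
    case False
    have "Re (cinner ((S ^^ n) x) x) \<le> 1 * (norm x)^2"
      using norm_funpow_contraction_op[OF S] by (intro Re_cinner_le_of_norm_le) simp
    then show ?thesis using sqrt_coeff_nonpos[of n] False
      by (intro mult_left_mono_neg) auto
  qed
  then have "suminf sqrt_coeff * (norm x)^2 \<le> Re (cinner (op_series sqrt_coeff S x) x)"
    by (rule sums_le[OF _ upper lower])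
  moreover have "0 \<le> suminf sqrt_coeff * (norm x)^2" using suminf_sqrt_coeff_nonneg by simp
  ultimately show ?thesis by linarith
qed

lemma
  assumes T: "positive_op T" and lam: "lam > 0" and bound: "\<And>x. norm (T x) \<le> lam * norm x"
  shows positive_op_op_sqrt: "positive_op (op_sqrt lam T)"
    and op_sqrt_square: "op_sqrt lam T (op_sqrt lam T x) = T x"
proof -
  note S = contraction_op_compl_op[OF assms] selfadjoint_op_compl_op[OF assms]
  have series: "bounded_clinear (op_series sqrt_coeff (compl_op lam T))"
    by (rule bounded_clinear_op_series[OF S(1) summable_abs_sqrt_coeff])
  have "op_sqrt lam T (op_sqrt lam T x)
      = (sqrt lam * sqrt lam) *\<^sub>R op_series sqrt_coeff (compl_op lam T) (op_series sqrt_coeff (compl_op lam T) x)"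
    by (simp add: op_sqrt_def bounded_clinear_simps[OF series])
  also have "\<dots> = T x"
    using lam by (simp add: op_series_sqrt_coeff_square[OF S(1)] compl_op_def)
  finally show "op_sqrt lam T (op_sqrt lam T x) = T x" .
  have "bounded_clinear (op_sqrt lam T)"
    unfolding op_sqrt_def[abs_def] by (intro bounded_clinear_scaleR series)
  moreover have "Im (cinner (op_series sqrt_coeff (compl_op lam T) x) x) = 0" for x
    by (rule selfadjoint_op_Im_cinner[OF selfadjoint_op_series[OF S(1) summable_abs_sqrt_coeff S(2)]])
  moreover have "cinner (op_sqrt lam T x) x = of_real (sqrt lam) * cinner (op_series sqrt_coeff (compl_op lam T) x) x" for x
    by (simp add: op_sqrt_def cinner_scaleR_left)
  ultimately show "positive_op (op_sqrt lam T)"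
    unfolding positive_op_def
    using Re_cinner_op_series_sqrt_coeff_nonneg[OF S(1)] lam by simp
qed

text \<open>Uniqueness: with D = R - R', the operator R + R' annihilates the range of D, hence so
  do R and R', so D maps into the kernel of D; as D is self-adjoint, D = 0.\<close>

lemma positive_op_sqrt_unique:
  assumes R: "positive_op R" and R': "positive_op R'"
    and square: "\<And>x. R (R x) = R' (R' x)" and commute: "\<And>x. R (R' x) = R' (R x)"
  shows "R = R'"
proof
  fix x
  have Rb: "bounded_clinear R" and R'b: "bounded_clinear R'"
    using R R' by (auto intro: positive_op_bounded_clinear)
  have kernel: "P y = 0" if P: "positive_op P" and "Re (cinner (P y) y) = 0" for P y
  proof -
    have "(cmod (cinner (P y) (P y)))^2 \<le> Re (cinner (P y) y) * Re (cinner (P (P y)) (P y))"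
      by (rule positive_op_Cauchy_Schwarz[OF P])
    then show ?thesis using that by (simp add: cinner_self_eq_zero)
  qed
  define y where "y = R x - R' x"
  have "R y + R' y = 0"
    by (simp add: y_def bounded_clinear_simps[OF Rb] bounded_clinear_simps[OF R'b] square commute)
  then have "Re (cinner (R y) y) + Re (cinner (R' y) y) = 0"
    by (metis cinner_add_left cinner_zero_left plus_complex.sel(1) zero_complex.sel(1))
  then have "Re (cinner (R y) y) = 0" "Re (cinner (R' y) y) = 0"
    using positive_op_Re_cinner_nonneg[OF R, of y] positive_op_Re_cinner_nonneg[OF R', of y]
    by linarith+
  then have "R y = 0" "R' y = 0" using kernel R R' by blast+
  moreover have "cinner y y = cinner (R y - R' y) x"
    using positive_op_selfadjoint[OF R] positive_op_selfadjoint[OF R']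
    by (simp add: y_def selfadjoint_op_def cinner_simps)
  ultimately show "R x = R' x" by (simp add: cinner_self_eq_zero y_def)
qed

lemma sqrt_op_eq_op_sqrt:
  assumes T: "positive_op T" and lam: "lam > 0" and bound: "\<And>x. norm (T x) \<le> lam * norm x"
  shows "sqrt_op T = op_sqrt lam T"
  unfolding sqrt_op_def
proof (rule the_equality)
  show "positive_op (op_sqrt lam T) \<and> op_sqrt lam T \<circ> op_sqrt lam T = T"
    using positive_op_op_sqrt[OF assms] op_sqrt_square[OF assms] by auto
  fix R assume R: "positive_op R \<and> R \<circ> R = T"
  then have square: "R (R x) = T x" for x by (metis comp_apply)
  have Rb: "bounded_clinear R" using R by (simp add: positive_op_bounded_clinear)
  have "R (compl_op lam T x) = compl_op lam T (R x)" for x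
    by (simp add: compl_op_def bounded_clinear_simps[OF Rb] flip: square)
  then have "op_sqrt lam T (R x) = R (op_sqrt lam T x)" for x
    using op_series_commute[OF contraction_op_compl_op[OF assms] contraction_op_compl_op[OF assms]
        summable_abs_sqrt_coeff Rb]
    by (simp add: op_sqrt_def bounded_clinear_simps[OF Rb])
  then show "R = op_sqrt lam T"
    using R positive_op_op_sqrt[OF assms] op_sqrt_square[OF assms] square
    by (intro positive_op_sqrt_unique[symmetric]) auto
qed

lemma
  assumes T: "positive_op T"
  shows positive_op_sqrt_op: "positive_op (sqrt_op T)"
    and sqrt_op_square: "sqrt_op T (sqrt_op T x) = T x"
proof -
  obtain K where "K > 0" "\<And>x. norm (T x) \<le> K * norm x"
    using bounded_clinear_bound[OF positive_op_bounded_clinear[OF T]] by metis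
  then show "positive_op (sqrt_op T)" "sqrt_op T (sqrt_op T x) = T x"
    using positive_op_op_sqrt[OF T] op_sqrt_square[OF T] sqrt_op_eq_op_sqrt[OF T] by auto
qed

lemma sqrt_op_intertwine:
  assumes T1: "positive_op T1" and T2: "positive_op T2" and lam: "lam > 0"
    and bound1: "\<And>x. norm (T1 x) \<le> lam * norm x" and bound2: "\<And>x. norm (T2 x) \<le> lam * norm x"
    and A: "bounded_clinear A" and intertwine: "\<And>x. A (T1 x) = T2 (A x)"
  shows "A (sqrt_op T1 x) = sqrt_op T2 (A x)"
proof -
  have "A (compl_op lam T1 x) = compl_op lam T2 (A x)" for x
    by (simp add: compl_op_def bounded_clinear_simps[OF A] intertwine)
  then show ?thesis
    unfolding sqrt_op_eq_op_sqrt[OF T1 lam bound1] sqrt_op_eq_op_sqrt[OF T2 lam bound2] op_sqrt_def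
    using op_series_commute[OF contraction_op_compl_op[OF T1 lam bound1]
        contraction_op_compl_op[OF T2 lam bound2] summable_abs_sqrt_coeff A]
    by (simp add: bounded_clinear_simps[OF A])
qed

section \<open>The mixed Schwarz inequality\<close>

lemma shift_eq_compl_op:
  assumes "M > 0" "e \<ge> 0"
  shows "P x + e *\<^sub>R x = (M + e) *\<^sub>R (x - (M / (M + e)) *\<^sub>R compl_op M P x)"
proof -
  have r: "(M + e) * (M / (M + e)) = M" using assms by simp
  have "(M + e) *\<^sub>R (x - (M / (M + e)) *\<^sub>R compl_op M P x)
      = (M + e) *\<^sub>R x - ((M + e) * (M / (M + e))) *\<^sub>R compl_op M P x"
    by (simp add: scaleR_diff_right)
  also have "\<dots> = (M + e) *\<^sub>R x - M *\<^sub>R (x - (1 / M) *\<^sub>R P x)" by (simp only: r compl_op_def)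
  also have "\<dots> = P x + e *\<^sub>R x" using assms by (simp add: algebra_simps)
  finally show ?thesis by simp
qed

lemma Re_cinner_right_inverse_nonneg:
  assumes P: "positive_op P" and e: "e \<ge> 0" and K: "P (K z) + e *\<^sub>R K z = z"
  shows "0 \<le> Re (cinner (K z) z)"
proof -
  define w where "w = K z"
  have z: "z = P w + e *\<^sub>R w" using K by (simp add: w_def)
  have "cinner (K z) z = cinner w (P w) + of_real e * of_real ((norm w)^2)"
    by (simp add: z[symmetric] w_def[symmetric]) (simp add: z cinner_simps cinner_self)
  moreover have "cinner w (P w) = cnj (cinner (P w) w)" by (rule cinner_commute)
  then have "Re (cinner w (P w)) = Re (cinner (P w) w)" by simp
  ultimately show ?thesis using positive_op_Re_cinner_nonneg[OF P, of w] e by simp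
qed

text \<open>The inverse of P + e I is the geometric series in I - P/M, scaled by 1/(M + e).\<close>

lemma positive_op_shift_inverse:
  assumes P: "positive_op P" and e: "e > 0"
  obtains K where "positive_op K" "\<And>x. K (P x + e *\<^sub>R x) = x" "\<And>x. P (K x) + e *\<^sub>R K x = x"
    "\<And>x. K (P x) = P (K x)"
proof -
  obtain M where M: "M > 0" and bound: "\<And>x. norm (P x) \<le> M * norm x"
    using bounded_clinear_bound[OF positive_op_bounded_clinear[OF P]] by metis
  define S where "S = compl_op M P"
  have S: "contraction_op S" "selfadjoint_op S"
    unfolding S_def using contraction_op_compl_op[OF P M bound] selfadjoint_op_compl_op[OF P M bound] .
  have Sb: "bounded_clinear S" and Pb: "bounded_clinear P"
    using S(1) P by (simp_all add: contraction_op_def positive_op_bounded_clinear)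
  define r where "r = M / (M + e)"
  have r: "\<bar>r\<bar> < 1" using M e by (simp add: r_def)
  have summable: "summable (\<lambda>n. \<bar>r ^ n\<bar>)" using r by (simp add: power_abs summable_geometric)
  define G where "G = op_series (\<lambda>n. r ^ n) S"
  have Gb: "bounded_clinear G" unfolding G_def by (rule bounded_clinear_op_series[OF S(1) summable])
  have geometric: "G x - r *\<^sub>R S (G x) = x" for x
    unfolding G_def by (rule op_series_geometric[OF S(1) r])
  have shift: "P x + e *\<^sub>R x = (M + e) *\<^sub>R (x - r *\<^sub>R S x)" for x
    unfolding S_def r_def using M e by (intro shift_eq_compl_op) auto
  define K where "K x = (1 / (M + e)) *\<^sub>R G x" for x
  have K_right: "P (K x) + e *\<^sub>R K x = x" for x
  proof -
    have "P (K x) + e *\<^sub>R K x = (M + e) *\<^sub>R (K x - r *\<^sub>R S (K x))" by (rule shift)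
    also have "\<dots> = G x - r *\<^sub>R S (G x)"
      using M e by (simp add: K_def bounded_clinear_simps[OF Sb] scaleR_diff_right)
    finally show ?thesis by (simp add: geometric)
  qed
  show ?thesis
  proof (rule that)
    have "G (S x) = S (G x)" for x
      unfolding G_def by (rule op_series_commute[OF S(1) S(1) summable Sb, symmetric]) simp
    then show "K (P x + e *\<^sub>R x) = x" for x
      using M e geometric[of x] by (simp add: shift K_def bounded_clinear_simps[OF Gb])
    have "P (S x) = S (P x)" for x by (simp add: S_def compl_op_def bounded_clinear_simps[OF Pb])
    then show "K (P x) = P (K x)" for x
      using op_series_commute[OF S(1) S(1) summable Pb] by (simp add: K_def G_def bounded_clinear_simps[OF Pb])
    have "Im (cinner (K z) z) = 0" for z
      using selfadjoint_op_Im_cinner[OF selfadjoint_op_series[OF S(1) summable S(2)]]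
      by (simp add: K_def G_def cinner_scaleR_left)
    moreover have "0 \<le> Re (cinner (K z) z)" for z
      using e by (intro Re_cinner_right_inverse_nonneg[where K=K and e=e, OF P _ K_right]) simp
    moreover have "bounded_clinear K" unfolding K_def[abs_def] by (intro bounded_clinear_scaleR Gb)
    ultimately show "positive_op K" unfolding positive_op_def by simp
  qed (rule K_right)
qed

lemma positive_op_adj_comp:
  assumes A: "bounded_clinear A"
  shows "positive_op (adj A \<circ> A)"
  unfolding positive_op_def
  using bounded_clinear_compose[OF bounded_clinear_adj[OF A] A]
  by (simp add: cinner_adj_left[OF A] cinner_self)

lemma
  assumes A: "bounded_clinear A"
  shows positive_op_abs_op: "positive_op (abs_op A)"
    and abs_op_square: "abs_op A (abs_op A x) = adj A (A x)"
  using positive_op_sqrt_op[OF positive_op_adj_comp[OF A]] sqrt_op_square[OF positive_op_adj_comp[OF A]]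
  by (simp_all add: abs_op_def)

lemma abs_op_intertwine:
  assumes A: "bounded_clinear A"
  shows "A (abs_op A x) = abs_op (adj A) (A x)"
proof -
  have A': "bounded_clinear (adj A)" by (rule bounded_clinear_adj[OF A])
  obtain KA where KA: "KA > 0" "\<And>x. norm (A x) \<le> KA * norm x" using bounded_clinear_bound[OF A] by metis
  obtain KB where KB: "KB > 0" "\<And>x. norm (adj A x) \<le> KB * norm x" using bounded_clinear_bound[OF A'] by metis
  have "norm (A (adj A x)) \<le> (KA * KB) * norm x" "norm (adj A (A x)) \<le> (KA * KB) * norm x" for x
  proof -
    show "norm (A (adj A x)) \<le> (KA * KB) * norm x"
      using order_trans[OF KA(2) mult_left_mono[OF KB(2)]] KA(1) by (simp add: mult.assoc)
    show "norm (adj A (A x)) \<le> (KA * KB) * norm x"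
      using order_trans[OF KB(2) mult_left_mono[OF KA(2)]] KB(1) by (simp add: mult_ac)
  qed
  then show ?thesis
    unfolding abs_op_def adj_adj[OF A]
    using sqrt_op_intertwine[OF positive_op_adj_comp[OF A] positive_op_adj_comp[OF A'] _ _ _ A,
        unfolded adj_adj[OF A], of "KA * KB"] KA(1) KB(1)
    by simp
qed

lemma shift_inverse_intertwine:
  assumes A: "bounded_clinear A" and AP: "\<And>x. A (P x) = Q (A x)"
    and KP: "\<And>x. P (KP x) + e *\<^sub>R KP x = x" and KQ: "\<And>x. KQ (Q x + e *\<^sub>R x) = x"
  shows "A (KP v) = KQ (A v)"
proof -
  have "A v = Q (A (KP v)) + e *\<^sub>R A (KP v)"
    using arg_cong[OF KP[of v], of A] by (simp add: bounded_clinear_simps[OF A] AP)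
  then show ?thesis by (simp add: KQ)
qed

lemma Re_cinner_shift_inverse_square_le:
  assumes Q: "positive_op Q" and e: "e \<ge> 0"
    and K: "\<And>x. Q (K x) + e *\<^sub>R K x = x" and commute: "\<And>x. K (Q x) = Q (K x)"
  shows "Re (cinner (K (Q (Q y))) y) \<le> Re (cinner (Q y) y)"
proof -
  have Qb: "bounded_clinear Q" by (rule positive_op_bounded_clinear[OF Q])
  define w where "w = K y"
  have y: "y = Q w + e *\<^sub>R w" using K[of y] by (simp add: w_def)
  have "cinner (K (Q (Q y))) y = cinner (Q (Q w)) (Q w) + of_real e * cinner (Q (Q w)) w"
    by (simp add: commute w_def[symmetric]) (simp add: y cinner_simps)
  moreover have "cinner (Q (Q w)) w = of_real ((norm (Q w))^2)"
    using positive_op_selfadjoint[OF Q] by (simp add: selfadjoint_op_def cinner_self)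
  moreover have "cinner (Q y) y = cinner (Q (Q w)) (Q w) + of_real e * cinner (Q (Q w)) w
      + of_real e * of_real ((norm (Q w))^2) + of_real e * of_real e * cinner (Q w) w"
    by (simp add: y bounded_clinear_simps[OF Qb] cinner_simps cinner_self algebra_simps)
  moreover have "0 \<le> e * (norm (Q w))^2 + e * e * Re (cinner (Q w) w)"
    using e positive_op_Re_cinner_nonneg[OF Q, of w] by simp
  ultimately show ?thesis by simp
qed

text \<open>Kato's mixed Schwarz inequality, first with |A| replaced by |A| + e I, which is invertible:
  if K is its inverse then (A x, y) = (K u, v) with u = |A| x + e x and v = A* y, and the
  Cauchy--Schwarz inequality for K bounds the two factors.\<close>

lemma mixed_Schwarz_shifted:
  assumes A: "bounded_clinear A" and e: "e > 0"
  shows "(cmod (cinner (A x) y))^2 \<le>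
     (Re (cinner (abs_op A x) x) + e * (norm x)^2) * Re (cinner (abs_op (adj A) y) y)"
proof -
  define P where "P = abs_op A"
  define Q where "Q = abs_op (adj A)"
  have P: "positive_op P" and Q: "positive_op Q"
    unfolding P_def Q_def using bounded_clinear_adj[OF A] by (simp_all add: positive_op_abs_op A)
  obtain KP where KP: "positive_op KP" "\<And>x. KP (P x + e *\<^sub>R x) = x" "\<And>x. P (KP x) + e *\<^sub>R KP x = x"
    using positive_op_shift_inverse[OF P e] by metis
  obtain KQ where KQ: "\<And>x. KQ (Q x + e *\<^sub>R x) = x" "\<And>x. Q (KQ x) + e *\<^sub>R KQ x = x"
      "\<And>x. KQ (Q x) = Q (KQ x)"
    using positive_op_shift_inverse[OF Q e] by metis
  define u where "u = P x + e *\<^sub>R x"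
  define v where "v = adj A y"
  have "(cmod (cinner (A x) y))^2 = (cmod (cinner (KP u) v))^2"
    by (simp add: u_def v_def KP(2) cinner_adj_right[OF A])
  also have "\<dots> \<le> Re (cinner (KP u) u) * Re (cinner (KP v) v)"
    by (rule positive_op_Cauchy_Schwarz[OF KP(1)])
  also have "Re (cinner (KP u) u) = Re (cinner (P x) x) + e * (norm x)^2"
  proof -
    have "cinner (KP u) u = cinner x (P x) + of_real e * of_real ((norm x)^2)"
      by (simp add: u_def KP(2) cinner_simps cinner_self)
    moreover have "cinner x (P x) = cnj (cinner (P x) x)" by (rule cinner_commute)
    ultimately show ?thesis by simp
  qed
  also have "Re (cinner (KP v) v) \<le> Re (cinner (Q y) y)"
  proof -
    have "cinner (KP v) v = cinner (A (KP v)) y" by (simp add: v_def cinner_adj_right[OF A])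
    also have "A (KP v) = KQ (Q (Q y))"
      using shift_inverse_intertwine[OF A _ KP(3) KQ(1), of v] abs_op_intertwine[OF A]
        abs_op_square[OF bounded_clinear_adj[OF A]]
      by (simp add: v_def P_def Q_def adj_adj[OF A])
    finally show ?thesis
      using Re_cinner_shift_inverse_square_le[OF Q _ KQ(2,3)] e by simp
  qed
  then have "(Re (cinner (P x) x) + e * (norm x)^2) * Re (cinner (KP v) v)
      \<le> (Re (cinner (P x) x) + e * (norm x)^2) * Re (cinner (Q y) y)"
    using positive_op_Re_cinner_nonneg[OF P, of x] e by (intro mult_left_mono) auto
  finally show ?thesis by (simp add: P_def Q_def)
qed

lemma mixed_Schwarz:
  assumes A: "bounded_clinear A"
  shows "(cmod (cinner (A x) y))^2 \<le> Re (cinner (abs_op A x) x) * Re (cinner (abs_op (adj A) y) y)"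
proof (rule field_le_epsilon)
  fix t :: real assume t: "0 < t"
  define q where "q = Re (cinner (abs_op (adj A) y) y)"
  have q: "0 \<le> q"
    unfolding q_def by (rule positive_op_Re_cinner_nonneg[OF positive_op_abs_op[OF bounded_clinear_adj[OF A]]])
  define e where "e = t / (((norm x)^2 + 1) * (q + 1))"
  have denom: "((norm x)^2 + 1) * (q + 1) > 0"
    using q by (intro mult_pos_pos) (auto intro: add_nonneg_pos)
  then have e: "e > 0" using t by (simp add: e_def)
  have "(cmod (cinner (A x) y))^2 \<le> (Re (cinner (abs_op A x) x) + e * (norm x)^2) * q"
    unfolding q_def by (rule mixed_Schwarz_shifted[OF A e])
  also have "\<dots> = Re (cinner (abs_op A x) x) * q + e * ((norm x)^2 * q)" by (simp add: algebra_simps)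
  also have "e * ((norm x)^2 * q) \<le> e * (((norm x)^2 + 1) * (q + 1))"
    using e q by (intro mult_left_mono) (auto simp: algebra_simps)
  also have "\<dots> = t" using denom unfolding e_def by (metis less_irrefl nonzero_divide_eq_eq mult.commute)
  finally show "(cmod (cinner (A x) y))^2 \<le> Re (cinner (abs_op A x) x) * Re (cinner (abs_op (adj A) y) y) + t"
    by (simp add: q_def)
qed

section \<open>Numerical radius\<close>

lemma bdd_above_numrad:
  assumes "bounded_clinear T"
  shows "bdd_above (insert 0 {cmod (cinner (T x) x) | x. norm x = 1})"
proof -
  obtain K where K: "K > 0" "\<And>x. norm (T x) \<le> K * norm x" using bounded_clinear_bound[OF assms] by metis
  have "cmod (cinner (T x) x) \<le> K" if "norm x = 1" for x
    using cinner_Cauchy_Schwarz[of "T x" x] K(2)[of x] that by simp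
  then show ?thesis using K(1) by (auto intro!: bdd_aboveI[of _ K])
qed

lemma cmod_cinner_le_numrad:
  assumes "bounded_clinear T" "norm x = 1"
  shows "cmod (cinner (T x) x) \<le> numrad T"
  unfolding numrad_def using assms(2) by (intro cSup_upper bdd_above_numrad[OF assms(1)]) auto

lemma numrad_nonneg: "bounded_clinear T \<Longrightarrow> 0 \<le> numrad T"
  unfolding numrad_def by (intro cSup_upper bdd_above_numrad) auto

lemma numrad_le:
  assumes "\<And>x. norm x = 1 \<Longrightarrow> cmod (cinner (T x) x) \<le> c" "0 \<le> c"
  shows "numrad T \<le> c"
  unfolding numrad_def using assms by (intro cSup_least) auto

lemma numrad_power2_le:
  assumes "bounded_clinear T" "0 \<le> c" "\<And>x. norm x = 1 \<Longrightarrow> (cmod (cinner (T x) x))^2 \<le> c"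
  shows "(numrad T)^2 \<le> c"
proof -
  have "numrad T \<le> sqrt c" using assms(2,3) by (intro numrad_le) (auto simp: real_le_rsqrt)
  then have "(numrad T)^2 \<le> (sqrt c)^2" using numrad_nonneg[OF assms(1)] by (intro power_mono)
  then show ?thesis using assms(2) by simp
qed

text \<open>The reflection v' = 2 (e, v) e - v of v in the line through the unit vector e has the norm
  of v; apply Cauchy--Schwarz to (u, v').\<close>

lemma Buzano_inequality:
  assumes e: "norm e = 1"
  shows "2 * cmod (cinner u e * cinner e v) \<le> norm u * norm v + cmod (cinner u (v::'a::chilbert))"
proof -
  define c where "c = cinner e v"
  define v' where "v' = scaleC (2 * c) e - v"
  have ee: "cinner e e = 1" using e by (simp add: cinner_self)
  have ve: "cinner v e = cnj c" by (simp add: c_def cinner_commute[of v e])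
  have "cinner v' v' = (cnj (2 * c) * (2 * c)) * cinner e e - cnj (2 * c) * cinner e v - (2 * c) * cinner v e + cinner v v"
    by (simp add: v'_def cinner_simps algebra_simps)
  also have "\<dots> = cinner v v"
    using cnj_mult_self[of c] mult_cnj_self[of c] by (simp add: ee ve c_def[symmetric] algebra_simps)
  finally have "norm v' = norm v" by (metis Re_cinner_self norm_ge_zero power2_eq_iff_nonneg)
  moreover have "cinner u v' = 2 * (cinner u e * c) - cinner u v"
    by (simp add: v'_def cinner_simps mult_ac)
  ultimately have "cmod (2 * (cinner u e * c) - cinner u v) \<le> norm u * norm v"
    using cinner_Cauchy_Schwarz[of u v'] by simp
  moreover have "cmod (2 * (cinner u e * c)) \<le> cmod (2 * (cinner u e * c) - cinner u v) + cmod (cinner u v)"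
    using norm_triangle_ineq[of "2 * (cinner u e * c) - cinner u v" "cinner u v"] by simp
  ultimately show ?thesis by (simp add: c_def norm_mult)
qed

lemma Re_cinner_le_onorm:
  assumes "bounded_linear G"
  shows "Re (cinner (G x) x) \<le> onorm G * (norm x)^2"
proof -
  have "Re (cinner (G x) x) \<le> norm (G x) * norm x"
    using complex_Re_le_cmod cinner_Cauchy_Schwarz order_trans by blast
  also have "\<dots> \<le> onorm G * norm x * norm x"
    using onorm[OF assms, of x] by (intro mult_right_mono) auto
  finally show ?thesis by (simp add: power2_eq_square mult.assoc)
qed

lemma cinner_abs_op_estimate:
  assumes A: "bounded_clinear A" and x: "norm x = 1"
  shows "(cmod (cinner (A x) x))^2 \<le>
      1/4 * (cmod (cinner (abs_op A x + scaleC \<i> (abs_op (adj A) x)) x))^2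
    + 1/8 * Re (cinner (abs_op A (abs_op A x) + abs_op (adj A) (abs_op (adj A) x)) x)
    + 1/4 * cmod (cinner (abs_op A (abs_op (adj A) x)) x)"
proof -
  define P where "P = abs_op A"
  define Q where "Q = abs_op (adj A)"
  have P: "positive_op P" and Q: "positive_op Q"
    unfolding P_def Q_def using bounded_clinear_adj[OF A] by (simp_all add: positive_op_abs_op A)
  have self_P: "cinner (P u) v = cinner u (P v)" and self_Q: "cinner (Q u) v = cinner u (Q v)" for u v
    using positive_op_selfadjoint[OF P] positive_op_selfadjoint[OF Q] by (simp_all add: selfadjoint_op_def)
  define a where "a = Re (cinner (P x) x)"
  define b where "b = Re (cinner (Q x) x)"
  have a: "0 \<le> a" "cinner (P x) x = of_real a"
    using positive_op_Re_cinner_nonneg[OF P, of x] selfadjoint_op_Im_cinner[OF positive_op_selfadjoint[OF P], of x]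
    by (simp_all add: a_def complex_eq_iff)
  have b: "0 \<le> b" "cinner (Q x) x = of_real b" "cinner x (Q x) = of_real b"
    using positive_op_Re_cinner_nonneg[OF Q, of x] selfadjoint_op_Im_cinner[OF positive_op_selfadjoint[OF Q], of x]
      self_Q[of x x] by (simp_all add: b_def complex_eq_iff)
  have mixed: "(cmod (cinner (A x) x))^2 \<le> a * b"
    using mixed_Schwarz[OF A, of x x] by (simp add: a_def b_def P_def Q_def)
  have "2 * (a * b) \<le> a^2 + b^2"
    using sum_squares_bound[of a b] by (simp add: power2_eq_square)
  also have "a^2 + b^2 = (cmod (cinner (P x + scaleC \<i> (Q x)) x))^2"
    by (simp add: cinner_simps a b cmod_power2)
  finally have W: "2 * (a * b) \<le> (cmod (cinner (P x + scaleC \<i> (Q x)) x))^2" .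
  have "2 * (a * b) \<le> norm (P x) * norm (Q x) + cmod (cinner (P x) (Q x))"
    using Buzano_inequality[OF x, of "P x" "Q x"] a b by (simp add: norm_mult)
  also have "norm (P x) * norm (Q x) \<le> Re (cinner (P (P x) + Q (Q x)) x) / 2"
    using sum_squares_bound[of "norm (P x)" "norm (Q x)"]
    by (simp add: cinner_simps self_P[of "P x"] self_Q[of "Q x"] Re_cinner_self power2_eq_square)
  also have "cmod (cinner (P x) (Q x)) = cmod (cinner (P (Q x)) x)"
    by (metis complex_mod_cnj cinner_commute self_P)
  finally have G: "2 * (a * b) \<le> Re (cinner (P (P x) + Q (Q x)) x) / 2 + cmod (cinner (P (Q x)) x)"
    by simp
  from mixed W G show ?thesis unfolding P_def Q_def by linarith
qed

theorem mainTheorem1: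
  fixes A :: "'a::chilbert \<Rightarrow> 'a"
  assumes "bounded_clinear A"
  shows "(numrad A)\<^sup>2 \<le>
           1/4 * (numrad (\<lambda>x. abs_op A x + scaleC \<i> (abs_op (adj A) x)))\<^sup>2
         + 1/8 * onorm (\<lambda>x. abs_op A (abs_op A x) + abs_op (adj A) (abs_op (adj A) x))
         + 1/4 * numrad (abs_op A \<circ> abs_op (adj A))"
    (is "_ \<le> 1/4 * (numrad ?W)^2 + 1/8 * onorm ?G + 1/4 * numrad ?PQ")
proof (rule numrad_power2_le[OF assms])
  have P: "bounded_clinear (abs_op A)" and Q: "bounded_clinear (abs_op (adj A))"
    using positive_op_abs_op bounded_clinear_adj assms positive_op_bounded_clinear by blast+
  have W: "bounded_clinear ?W" by (intro bounded_clinear_add bounded_clinear_scaleC P Q)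
  have G: "bounded_linear ?G"
    using bounded_clinear_add[OF bounded_clinear_compose[OF P P] bounded_clinear_compose[OF Q Q]]
    by (simp add: comp_def bounded_clinear_imp_bounded_linear)
  have PQ: "bounded_clinear ?PQ" by (rule bounded_clinear_compose[OF P Q])
  show "0 \<le> 1/4 * (numrad ?W)^2 + 1/8 * onorm ?G + 1/4 * numrad ?PQ"
    using numrad_nonneg[OF PQ] onorm_pos_le[OF G] by simp
  fix x :: 'a assume x: "norm x = 1"
  have "(cmod (cinner (?W x) x))^2 \<le> (numrad ?W)^2"
    using cmod_cinner_le_numrad[OF W x] by (intro power_mono) auto
  moreover have "Re (cinner (?G x) x) \<le> onorm ?G" using Re_cinner_le_onorm[OF G, of x] x by simp
  moreover have "cmod (cinner (?PQ x) x) \<le> numrad ?PQ" by (rule cmod_cinner_le_numrad[OF PQ x])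
  ultimately show "(cmod (cinner (A x) x))^2 \<le> 1/4 * (numrad ?W)^2 + 1/8 * onorm ?G + 1/4 * numrad ?PQ"
    using cinner_abs_op_estimate[OF assms x] by simp
qed

end
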